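(* Let $C$ be a field of characteristic zero, let $P(x,y)\in C[x,y]$ be a polynomial with $\deg_yP=d$, and let $R(x)=\operatorname{Res}_y(P,P_y)$. Assume that $\alpha\in\bar C$ is a root of $R(x)$ of multiplicity $k$. Then the squarefree part \[ S(y)=P(\alpha,y)\big/\gcd\bigl(P(\alpha,y),P_y(\alpha,y)\bigr) \] of $P(\alpha,y)$ has degree at least $d-k$.
   Context: $P_y$ is the partial derivative of $P$ with respect to $y$, and $\operatorname{Res}_y$ is the resultant with respect to $y$ (determinant of the Sylvester matrix). *)

theory Defs
  imports "Subresultants.Resultant_Prelim" "HOL-Computational_Algebra.Polynomial_Factorial"
begin

text \<open>Bivariate polynomials P(x,y) are represented as 'a poly poly: a polynomial in y
  whose coefficients are polynomials in x.  Evaluation of the x-variable at a point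
  alpha of an extension field (given by a field embedding f) yields a univariate
  polynomial in y.\<close>

definition eval_x :: "('a::comm_ring_1 \<Rightarrow> 'b::comm_ring_1) \<Rightarrow> 'b \<Rightarrow> 'a poly poly \<Rightarrow> 'b poly" where
  "eval_x f \<alpha> P = map_poly (\<lambda>c. poly (map_poly f c) \<alpha>) P"

definition squarefree_part :: "'b::field_gcd poly \<Rightarrow> 'b poly" where
  "squarefree_part p = p div gcd p (pderiv p)"

end

theory Submission
  imports Defs
begin

text \<open>Write \<open>p = P(\<alpha>,y)\<close>, \<open>m = deg\<^sub>y P\<close>, \<open>s = deg S\<close> and \<open>g = gcd(p, p')\<close>, so that
  \<open>p = S g\<close> and \<open>p' = T g\<close> with \<open>deg T = s - 1\<close>.  The \<open>m - s\<close> syzygies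
  \<open>y\<^sup>i T \<cdot> p - y\<^sup>i S \<cdot> p' = 0\<close> (\<open>1 \<le> i \<le> m - s\<close>) are linear relations among the rows of the
  Sylvester matrix of \<open>P, P\<^sub>y\<close> evaluated at \<open>x = \<alpha>\<close>.  Since the coefficient vectors of the
  \<open>y\<^sup>i T\<close> are in echelon form, they extend to a unimodular row transformation over \<open>C[x]\<close>
  which makes \<open>m - s\<close> rows vanish at \<alpha>; hence \<open>(x - \<alpha>)\<^sup>m\<^sup>-\<^sup>s\<close> divides the resultant.\<close>

lemma sylvester_mat_sub_index_monom:
  fixes p q :: "'a::comm_semiring_1 poly"
  assumes "degree p \<le> m" "degree q \<le> n" "i < m + n" "j < m + n"
  shows "sylvester_mat_sub m n p q $$ (i, j) =
    (if i < n then coeff (monom 1 (n - i) * p) (m + n - j)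
     else coeff (monom 1 (m + n - i) * q) (m + n - j))"
  using assms by (auto simp: sylvester_mat_sub_index Polynomial.coeff_monom_mult coeff_eq_0)

lemma coeff_mult_eq_sum_coeff_monom_mult:
  fixes W x :: "'a::comm_semiring_1 poly"
  assumes "degree W \<le> L" "coeff W 0 = 0"
  shows "coeff (W * x) e = (\<Sum>i\<in>{1..L}. coeff W i * coeff (monom 1 i * x) e)"
proof -
  have "coeff (W * x) e = coeff ((\<Sum>i\<le>L. monom (coeff W i) i) * x) e"
    using poly_as_sum_of_monoms'[OF assms(1)] by simp
  also have "\<dots> = (\<Sum>i\<le>L. coeff W i * coeff (monom 1 i * x) e)"
    by (simp add: sum_distrib_right coeff_sum Polynomial.coeff_monom_mult, intro sum.cong) auto
  also have "{..L} = insert 0 {1..L}" by auto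
  finally show ?thesis
    using assms(2) by (subst (asm) sum.insert) auto
qed

definition sylvester_multiplier :: "nat \<Rightarrow> nat \<Rightarrow> 'a::zero poly \<Rightarrow> 'a poly \<Rightarrow> nat \<Rightarrow> 'a" where
  "sylvester_multiplier m n U V k = (if k < n then coeff U (n - k) else coeff V (m + n - k))"

text \<open>Column \<open>j\<close> of the Sylvester matrix carries the coefficient of \<open>y\<^sup>m\<^sup>+\<^sup>n\<^sup>-\<^sup>j\<close>; \<open>U\<close> and \<open>V\<close>
  must be divisible by \<open>y\<close> because the shifted copies of \<open>p\<close> and \<open>q\<close> in its rows start
  at \<open>y\<^sup>1 p\<close> and \<open>y\<^sup>1 q\<close>.\<close>
lemma sylvester_multiplier_times_sylvester_mat_sub:
  fixes p q U V :: "'a::comm_semiring_1 poly"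
  assumes "degree p \<le> m" "degree q \<le> n"
    and "coeff U 0 = 0" "degree U \<le> n" "coeff V 0 = 0" "degree V \<le> m"
    and "j < m + n"
  shows "(\<Sum>k<m + n. sylvester_multiplier m n U V k * sylvester_mat_sub m n p q $$ (k, j))
    = coeff (U * p + V * q) (m + n - j)"
proof -
  let ?e = "m + n - j"
  let ?g = "\<lambda>k. sylvester_multiplier m n U V k * sylvester_mat_sub m n p q $$ (k, j)"
  have "(\<Sum>k<m + n. ?g k) = (\<Sum>k\<in>{0..<n}. ?g k) + (\<Sum>k\<in>{n..<m + n}. ?g k)"
    by (simp add: lessThan_atLeast0 sum.atLeastLessThan_concat)
  also have "(\<Sum>k\<in>{0..<n}. ?g k) = (\<Sum>k\<in>{0..<n}. coeff U (n - k) * coeff (monom 1 (n - k) * p) ?e)"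
    using assms by (intro sum.cong) (auto simp: sylvester_mat_sub_index_monom sylvester_multiplier_def)
  also have "\<dots> = (\<Sum>i\<in>{1..n}. coeff U i * coeff (monom 1 i * p) ?e)"
    by (rule sum.reindex_bij_witness[of _ "\<lambda>i. n - i" "\<lambda>k. n - k"]) auto
  also have "(\<Sum>k\<in>{n..<m + n}. ?g k)
      = (\<Sum>k\<in>{n..<m + n}. coeff V (m + n - k) * coeff (monom 1 (m + n - k) * q) ?e)"
    using assms by (intro sum.cong) (auto simp: sylvester_mat_sub_index_monom sylvester_multiplier_def)
  also have "\<dots> = (\<Sum>i\<in>{1..m}. coeff V i * coeff (monom 1 i * q) ?e)"
    by (rule sum.reindex_bij_witness[of _ "\<lambda>i. m + n - i" "\<lambda>k. m + n - k"]) auto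
  finally show ?thesis
    using assms by (simp add: coeff_mult_eq_sum_coeff_monom_mult)
qed

lemma power_dvd_det_if_rows_dvd:
  fixes A :: "'a::idom_divide mat"
  assumes "A \<in> carrier_mat N N" "finite R" "R \<subseteq> {..<N}" "\<And>i j. i \<in> R \<Longrightarrow> j < N \<Longrightarrow> q dvd A $$ (i, j)"
  shows "q ^ card R dvd det A"
  using assms(2,1,3,4)
proof (induction R arbitrary: A rule: finite_induct)
  case empty
  then show ?case by simp
next
  case (insert r R)
  define B where "B = mat N N (\<lambda>(i, j). if i = r then A $$ (i, j) div q else A $$ (i, j))"
  have B: "B \<in> carrier_mat N N" unfolding B_def by auto
  have r: "r < N" using insert by auto
  have "A = multrow r q B"
    using insert B by (intro eq_matI) (auto simp: B_def)
  then have "det A = q * det B" using det_multrow[OF r B] by simp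
  moreover have "q ^ card R dvd det B"
    using insert by (intro insert.IH[OF B]) (auto simp: B_def)
  ultimately show ?case using insert by (simp add: mult_dvd_mono)
qed

lemma power_dvd_det_if_unimodular_rows_vanish:
  fixes M C :: "'a::field poly mat"
  assumes M: "M \<in> carrier_mat N N" and C: "C \<in> carrier_mat N N" and "is_unit (det C)" "L \<le> N"
    and vanish: "\<And>i j. i < L \<Longrightarrow> j < N \<Longrightarrow> poly ((C * M) $$ (i, j)) \<alpha> = 0"
  shows "[:-\<alpha>, 1:] ^ L dvd det M"
proof -
  have "[:-\<alpha>, 1:] ^ card {..<L} dvd det (C * M)"
    using assms by (intro power_dvd_det_if_rows_dvd[OF mult_carrier_mat[OF C M]])
      (auto simp: poly_eq_0_iff_dvd)
  then show ?thesis
    using det_mult[OF C M] \<open>is_unit (det C)\<close> by (simp add: dvd_mult_unit_iff')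
qed

lemma is_unit_det_upper_triangular:
  fixes C :: "'a::{comm_ring_1,algebraic_semidom} mat"
  assumes "upper_triangular C" "C \<in> carrier_mat N N" "\<And>i. i < N \<Longrightarrow> is_unit (C $$ (i, i))"
  shows "is_unit (det C)"
proof -
  have "is_unit (prod_list xs)" if "\<forall>x\<in>set xs. is_unit x" for xs :: "'a list"
    using that by (induction xs) auto
  moreover have "\<forall>x\<in>set (diag_mat C). is_unit x"
    using assms(2,3) by (auto simp: diag_mat_def)
  ultimately show ?thesis
    by (simp add: det_upper_triangular[OF assms(1,2)])
qed

text \<open>The relations \<open>y\<^sup>i b \<cdot> p - y\<^sup>i a \<cdot> r = 0\<close> for \<open>1 \<le> i \<le> L\<close> give \<open>L\<close> rows of a row
  transformation \<open>C\<close>; completed by unit rows, \<open>C\<close> is upper triangular with unit diagonal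
  because \<open>deg (y\<^sup>i b) = n - L + i\<close> is exact.\<close>
lemma power_dvd_det_sylvester_mat_sub_if_syzygy:
  fixes Q R :: "'a::field poly poly" and a b :: "'a poly"
  assumes "degree Q \<le> m" "degree R \<le> n" "b \<noteq> 0" "degree b + L = n" "degree a + L \<le> m"
    and syzygy: "b * map_poly (\<lambda>c. poly c \<alpha>) Q = a * map_poly (\<lambda>c. poly c \<alpha>) R"
  shows "[:-\<alpha>, 1:] ^ L dvd det (sylvester_mat_sub m n Q R)"
proof -
  define p where "p = map_poly (\<lambda>c. poly c \<alpha>) Q"
  define r where "r = map_poly (\<lambda>c. poly c \<alpha>) R"
  define M where "M = sylvester_mat_sub m n Q R"
  define U where "U i = monom 1 (L - i) * b" for i
  define V where "V i = - (monom 1 (L - i) * a)" for i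
  define C where "C = mat (m + n) (m + n) (\<lambda>(i, k).
    if i < L then [:sylvester_multiplier m n (U i) (V i) k:] else of_bool (i = k))"
  have M: "M \<in> carrier_mat (m + n) (m + n)" and C: "C \<in> carrier_mat (m + n) (m + n)"
    by (auto simp: M_def C_def)
  have poly_M: "poly (M $$ (k, j)) \<alpha> = sylvester_mat_sub m n p r $$ (k, j)"
    if "k < m + n" "j < m + n" for k j
  proof -
    have "map_mat (\<lambda>c. poly c \<alpha>) M = sylvester_mat_sub m n p r"
      unfolding M_def p_def r_def by (rule sylvester_mat_sub_map) simp
    then show ?thesis using that M by (metis carrier_matD index_map_mat(1))
  qed
  have degree_U: "degree (U i) = n - i" and "U i \<noteq> 0" if "i < L" for i
    using that assms(3,4) by (auto simp: U_def degree_mult_eq degree_monom_eq monom_eq_0_iff)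
  then have lead_U: "coeff (U i) (n - i) \<noteq> 0" if "i < L" for i
    using that by (metis leading_coeff_0_iff)
  have "is_unit (det C)"
  proof (rule is_unit_det_upper_triangular[OF _ C])
    show "upper_triangular C"
      using assms(4) degree_U by (auto simp: upper_triangular_def C_def sylvester_multiplier_def coeff_eq_0)
    show "is_unit (C $$ (i, i))" if "i < m + n" for i
      using that assms(4) lead_U
      by (cases "i < L") (auto simp: C_def sylvester_multiplier_def is_unit_const_poly_iff)
  qed
  moreover have "poly ((C * M) $$ (i, j)) \<alpha> = 0" if i: "i < L" and j: "j < m + n" for i j
  proof -
    have "(C * M) $$ (i, j) = (\<Sum>k<m + n. [:sylvester_multiplier m n (U i) (V i) k:] * M $$ (k, j))"
      using C M i j assms(4) by (auto simp: scalar_prod_def C_def lessThan_atLeast0 intro: sum.cong)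
    then have "poly ((C * M) $$ (i, j)) \<alpha>
        = (\<Sum>k<m + n. sylvester_multiplier m n (U i) (V i) k * sylvester_mat_sub m n p r $$ (k, j))"
      using j by (simp add: poly_sum poly_M)
    also have "\<dots> = coeff (U i * p + V i * r) (m + n - j)"
    proof (rule sylvester_multiplier_times_sylvester_mat_sub)
      show "degree p \<le> m" "degree r \<le> n"
        using assms(1,2) degree_map_poly_le order_trans unfolding p_def r_def by blast+
      show "degree (V i) \<le> m"
        using assms(5) by (cases "a = 0") (auto simp: V_def degree_mult_eq degree_monom_eq)
    qed (use i j degree_U in \<open>auto simp: U_def V_def Polynomial.coeff_monom_mult\<close>)
    also have "U i * p + V i * r = 0"
      using syzygy by (simp add: U_def V_def p_def r_def algebra_simps)
    finally show ?thesis by simp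
  qed
  ultimately show ?thesis
    using assms(4) unfolding M_def[symmetric]
    by (intro power_dvd_det_if_unimodular_rows_vanish[OF M C]) auto
qed

lemma coeff_pderiv_degree_minus_1_neq_0:
  fixes p :: "'a::idom poly"
  assumes "CHAR('a) = 0" "degree p > 0"
  shows "coeff (pderiv p) (degree p - 1) \<noteq> 0"
proof -
  have "coeff p (degree p) \<noteq> 0" using assms(2) by auto
  then show ?thesis
    using assms by (auto simp: coeff_pderiv CHAR_eq0_iff)
qed

lemma degree_pderiv_CHAR_0:
  fixes p :: "'a::idom poly"
  assumes "CHAR('a) = 0"
  shows "degree (pderiv p) = degree p - 1"
  using coeff_pderiv_degree_minus_1_neq_0[OF assms, of p] le_degree[of "pderiv p" "degree p - 1"]
    degree_pderiv_le[of p]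
  by (cases "degree p = 0") auto

lemma power_dvd_resultant_pderiv:
  fixes Q :: "'a::field_gcd poly poly"
  assumes "CHAR('a) = 0"
  shows "[:-\<alpha>, 1:] ^ (degree Q - degree (squarefree_part (map_poly (\<lambda>c. poly c \<alpha>) Q)))
    dvd resultant Q (pderiv Q)"
proof -
  define p where "p = map_poly (\<lambda>c. poly c \<alpha>) Q"
  define m where "m = degree Q"
  define s where "s = degree (squarefree_part p)"
  have resultant: "resultant Q (pderiv Q) = det (sylvester_mat_sub m (m - 1) Q (pderiv Q))"
    using assms by (simp add: resultant_def sylvester_mat_def m_def degree_pderiv_CHAR_0)
  have pderiv_p: "pderiv p = map_poly (\<lambda>c. poly c \<alpha>) (pderiv Q)"
    by (simp add: p_def poly_hom.map_poly_pderiv)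
  have "degree p \<le> m" unfolding p_def m_def by (rule degree_map_poly_le)
  have "[:-\<alpha>, 1:] ^ (m - s) dvd det (sylvester_mat_sub m (m - 1) Q (pderiv Q))"
  proof (cases "degree p = 0")
    case True
    then have "pderiv p = 0" by (metis degree_eq_zeroE pderiv_singleton)
    then have "[:-\<alpha>, 1:] ^ card {m - 1..<m + (m - 1)} dvd det (sylvester_mat_sub m (m - 1) Q (pderiv Q))"
      unfolding pderiv_p
      by (intro power_dvd_det_if_rows_dvd)
        (auto simp: sylvester_mat_sub_index poly_eq_0_iff_dvd[symmetric] coeff_map_poly
          dest!: arg_cong[where f = "\<lambda>r. coeff r _"])
    then show ?thesis
      by (rule dvd_trans[rotated]) (simp add: le_imp_power_dvd)
  next
    case False
    define g where "g = gcd p (pderiv p)"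
    define a where "a = p div g"
    define b where "b = pderiv p div g"
    have "pderiv p \<noteq> 0"
      using coeff_pderiv_degree_minus_1_neq_0[OF assms, of p] False by auto
    then have "p \<noteq> 0" "g \<noteq> 0" by (auto simp: g_def)
    have p: "p = a * g" and p': "pderiv p = b * g"
      by (simp_all add: a_def b_def g_def)
    have "s = degree a"
      by (simp add: s_def a_def g_def squarefree_part_def)
    moreover have "degree p = degree a + degree g" "degree (pderiv p) = degree b + degree g" "b \<noteq> 0"
      using p p' \<open>p \<noteq> 0\<close> \<open>pderiv p \<noteq> 0\<close> by (auto simp: degree_mult_eq)
    ultimately have "degree b + (m - s) = m - 1" "s + (m - s) \<le> m"
      using False \<open>degree p \<le> m\<close> assms by (auto simp: degree_pderiv_CHAR_0)
    moreover have "b * p = a * pderiv p"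
      using p p' by (metis mult.left_commute)
    then have "b * map_poly (\<lambda>c. poly c \<alpha>) Q = a * map_poly (\<lambda>c. poly c \<alpha>) (pderiv Q)"
      unfolding pderiv_p by (simp only: p_def)
    ultimately show ?thesis
      using \<open>b \<noteq> 0\<close> \<open>s = degree a\<close> assms unfolding m_def
      by (intro power_dvd_det_sylvester_mat_sub_if_syzygy[where a = a and b = b]) (auto simp: degree_pderiv_CHAR_0)
  qed
  then show ?thesis
    unfolding resultant m_def s_def p_def .
qed

lemma CHAR_eq_if_field_hom:
  fixes f :: "'a::field \<Rightarrow> 'b::field"
  assumes "field_hom f"
  shows "CHAR('b) = CHAR('a)"
proof -
  interpret f: field_hom f by fact
  have "of_nat n = (0 :: 'b) \<longleftrightarrow> of_nat n = (0 :: 'a)" for n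
    by (subst f.hom_of_nat[symmetric]) (rule f.hom_0_iff)
  then have "CHAR('b) dvd CHAR('a)" "CHAR('a) dvd CHAR('b)"
    by (metis of_nat_CHAR of_nat_eq_0_iff_char_dvd)+
  then show ?thesis
    by (rule dvd_antisym)
qed

theorem lemma13:
  fixes P :: "'a::field_char_0 poly poly"
    and f :: "'a \<Rightarrow> 'b::{alg_closed_field,field_gcd}"
    and \<alpha> :: 'b and d k :: nat
  assumes "field_hom f"
    and "degree P = d"
    and "resultant P (pderiv P) \<noteq> 0"
    and "poly (map_poly f (resultant P (pderiv P))) \<alpha> = 0"
    and "order \<alpha> (map_poly f (resultant P (pderiv P))) = k"
  shows "int (degree (squarefree_part (eval_x f \<alpha> P))) \<ge> int d - int k"
proof -
  interpret f: field_hom f by fact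
  interpret mp: map_poly_inj_idom_hom f ..
  define Q where "Q = map_poly (map_poly f) P"
  have "resultant Q (pderiv Q) = map_poly f (resultant P (pderiv P))"
    using mp.resultant_hom[of P "pderiv P"] by (simp add: Q_def mp.map_poly_pderiv)
  moreover have "eval_x f \<alpha> P = map_poly (\<lambda>c. poly c \<alpha>) Q"
    unfolding eval_x_def Q_def by (subst map_poly_map_poly) (auto simp: o_def)
  moreover have "CHAR('b) = 0"
    using CHAR_eq_if_field_hom[OF assms(1)] by simp
  ultimately have "[:-\<alpha>, 1:] ^ (d - degree (squarefree_part (eval_x f \<alpha> P)))
      dvd map_poly f (resultant P (pderiv P))"
    using power_dvd_resultant_pderiv[of \<alpha> Q] assms(2) by (simp add: Q_def)
  then have "d - degree (squarefree_part (eval_x f \<alpha> P)) \<le> k"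
    using assms(3,5) by (simp add: order_divides)
  then show ?thesis by linarith
qed

end
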